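(* Let $M=\sum_{n=1}^{\infty}\frac{2^{n-1}}{(3^{2/3})^n}=\frac{1}{3^{2/3}-2}$. Let the open intervals $J_n^k\subset[0,M]$ ($n\ge 1$, $1\le k\le 2^{n-1}$) and the set $A\subset[0,M]$ be constructed as follows: $J_1^1$ is the open interval of length $3^{-2/3}$ centered at the midpoint of $[0,M]$; for $n\ge 2$, the $2^{n-1}$ intervals $J_n^1,\dots,J_n^{2^{n-1}}$ are the open intervals of length $(3^{2/3})^{-n}$ centered at the midpoints of the $2^{n-1}$ connected components of $[0,M]\setminus(J_1\cup\dots\cup J_{n-1})$, where $J_m=\bigcup_{k=1}^{2^{m-1}}J_m^k$. (These intervals are pairwise disjoint.) Let $A=[0,M]\setminus\bigcup_{n\ge1}J_n$. Define $g:[0,M]\to\mathbb{R}$ by $g(x)=0$ for $x\in A$, and for $x\in J_n^k$, $$g(x)=\frac{4}{\mathcal{L}(J_n^k)^{1/2}}\,\mathrm{dist}(x,\partial J_n^k),$$ where $\mathcal{L}$ denotes Lebesgue measure (length). Then $g$ takes values in $[0,\infty)$ and: (1) $\max\{g(x): x\in J_n^k\}=2\,\mathcal{L}(J_n^k)^{1/2}$ for every $n,k$; (2) $g(x)=0$ if and only if $x\in A$; (3) $\int_{J_n^k}g(x)\,dx=\mathcal{L}(J_n^k)^{3/2}=\frac{1}{3^n}$ for every $n,k$, and $\int_0^M g(x)\,dx=1$; (4) $g$ is $\tfrac12$-Hölder continuous on $[0,M]$.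
   Context: $\mathcal{L}$ denotes one-dimensional Lebesgue measure; $\partial J$ denotes the set of endpoints of an interval $J$. *)

theory Defs
  imports "HOL-Analysis.Analysis"
begin

definition Mc :: real where
  "Mc = 1 / (3 powr (2/3) - 2)"

definition ell :: "nat \<Rightarrow> real" where
  "ell n = 1 / (3 powr (2/3)) ^ n"

definition Jfam :: "real set \<Rightarrow> nat \<Rightarrow> real set set" where
  "Jfam R n = (\<lambda>C. ball ((Inf C + Sup C) / 2) (ell n / 2)) ` components ({0..Mc} - R)"

primrec Removed :: "nat \<Rightarrow> real set" where
  "Removed 0 = {}"
| "Removed (Suc n) = Removed n \<union> \<Union> (Jfam (Removed n) (Suc n))"

definition Jset :: "nat \<Rightarrow> real set set" where
  "Jset n = Jfam (Removed (n - 1)) n"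

definition Aset :: "real set" where
  "Aset = {0..Mc} - (\<Union>n\<in>{1..}. \<Union> (Jset n))"

definition gfun :: "real \<Rightarrow> real" where
  "gfun x = (if \<exists>n\<ge>1. \<exists>J\<in>Jset n. x \<in> J
     then (let J = (SOME J. \<exists>n\<ge>1. J \<in> Jset n \<and> x \<in> J)
           in 4 / sqrt (measure lebesgue J) * infdist x (frontier J))
     else 0)"

definition holder_continuous_on :: "real \<Rightarrow> real set \<Rightarrow> (real \<Rightarrow> real) \<Rightarrow> bool" where
  "holder_continuous_on \<alpha> S f \<longleftrightarrow>
     (\<exists>C. \<forall>x\<in>S. \<forall>y\<in>S. \<bar>f x - f y\<bar> \<le> C * \<bar>x - y\<bar> powr \<alpha>)"

end

theory Submission
  imports Defs
begin

(* Write q = 3^(2/3), so that M = 1/(q - 2) and M/q^n = 2 M/q^(n+1) + q^-(n+1). By induction,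
   [0,M] - (J_1 \<union> ... \<union> J_n) is the union of 2^n disjoint closed gaps of length M/q^n, and J_(n+1)
   consists of the balls of radius q^-(n+1)/2 around their midpoints; in particular all J_n^k are
   disjoint. On J_n^k, g is a tent of height 2 L^(1/2) and integral L^(3/2) = 3^-n, where
   L = q^-n; monotone convergence over the 2^(n-1) intervals of each generation gives the total
   integral sum 2^(n-1)/3^n = 1. A tent of base L and height 2 L^(1/2) is 1/2-Hoelder with
   constant 4, since its increments are bounded both by 4 L^(-1/2) |x - y| and by 2 L^(1/2); as g
   agrees with the tent on J_n^k and dominates it elsewhere, the bound passes to g. *)

lemma components_Union_closed_disjoint:
  fixes F :: "'a::topological_space set set"
  assumes "finite F" and F: "\<And>C. C \<in> F \<Longrightarrow> closed C \<and> connected C \<and> C \<noteq> {}"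
    and "pairwise disjnt F"
  shows "components (\<Union>F) = F"
proof -
  have maximal: "D \<subseteq> C" if C: "C \<in> F" and D: "connected D" "D \<subseteq> \<Union>F" "C \<inter> D \<noteq> {}" for C D
  proof -
    let ?B = "\<Union>(F - {C})"
    have "closed ?B" using assms(1) F by (intro closed_Union) auto
    moreover have "C \<inter> ?B = {}" using assms(3) C by (auto simp: pairwise_def disjnt_def)
    ultimately have "?B \<inter> D = {}"
      using connected_closedD[of D C ?B] C D F by blast
    thus ?thesis using D(2) by blast
  qed
  have in_components: "C \<in> components (\<Union>F)" if "C \<in> F" for C
    unfolding in_components_maximal using F[OF that] maximal[OF that] that by blast
  have "K \<in> F" if K: "K \<in> components (\<Union>F)" for K
  proof -
    obtain x C where "x \<in> K" "x \<in> C" "C \<in> F"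
      using K in_components_nonempty in_components_subset by blast
    hence "K \<subseteq> C" "C \<subseteq> K"
      using maximal components_maximal[OF K] K in_components_connected in_components_subset F
      by (metis Int_iff empty_iff Union_upper)+
    thus ?thesis using \<open>C \<in> F\<close> by simp
  qed
  thus ?thesis using in_components by blast
qed

lemma sums_two_pow_div_pow:
  fixes q :: real
  assumes "2 < q"
  shows "(\<lambda>n. 2 ^ n / q ^ Suc n) sums (1 / (q - 2))"
proof -
  have "(\<lambda>n. 1 / q * (2 / q) ^ n) sums (1 / q * (1 / (1 - 2 / q)))"
    using assms by (intro sums_mult geometric_sums) simp
  moreover have "1 / q * (1 / (1 - 2 / q)) = 1 / (q - 2)"
    using assms by (simp add: field_simps)
  ultimately show ?thesis by (simp add: power_divide)
qed

definition scale :: real where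
  "scale = 3 powr (2/3)"

lemma scale_gt_2: "scale > 2"
proof -
  have "scale ^ 3 = 9" unfolding scale_def
    by (simp add: powr_realpow[symmetric] powr_powr)
  hence "2 ^ 3 < scale ^ 3" by simp
  thus ?thesis by (rule power_less_imp_less_base) (simp add: scale_def)
qed

lemma Mc_eq: "Mc = 1 / (scale - 2)"
  unfolding Mc_def scale_def ..

lemma Mc_pos: "Mc > 0"
  using scale_gt_2 unfolding Mc_eq by simp

lemma ell_eq: "ell n = 1 / scale ^ n"
  unfolding ell_def scale_def ..

lemma ell_pos: "ell n > 0"
  using scale_gt_2 unfolding ell_eq by simp

lemma ell_powr_three_halves: "ell n powr (3/2) = 1 / 3 ^ n"
proof -
  have "ell n = 1 / 3 powr (2/3 * real n)"
    unfolding ell_eq scale_def by (simp add: powr_realpow[symmetric] powr_powr)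
  also have "(1 / 3 powr (2/3 * real n)) powr (3/2) = 1 / 3 powr real n"
    by (simp add: powr_divide powr_powr)
  finally show ?thesis by (simp add: powr_realpow)
qed

lemma sums_Mc: "(\<lambda>n. 2 ^ n / scale ^ Suc n) sums Mc"
  unfolding Mc_eq using sums_two_pow_div_pow scale_gt_2 .

definition gap_len :: "nat \<Rightarrow> real" where
  "gap_len n = Mc / scale ^ n"

lemma gap_len_pos: "gap_len n > 0"
  using scale_gt_2 Mc_pos by (simp add: gap_len_def)

lemma gap_len_Suc: "gap_len n = 2 * gap_len (Suc n) + ell (Suc n)"
proof -
  have "scale * Mc = 2 * Mc + 1"
    using scale_gt_2 by (simp add: Mc_eq field_simps)
  thus ?thesis
    using scale_gt_2 by (simp add: gap_len_def ell_eq field_simps)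
qed

primrec gap_starts :: "nat \<Rightarrow> real set" where
  "gap_starts 0 = {0}"
| "gap_starts (Suc n) = gap_starts n \<union> (\<lambda>a. a + gap_len (Suc n) + ell (Suc n)) ` gap_starts n"

lemma finite_gap_starts: "finite (gap_starts n)"
  by (induction n) auto

lemma gap_starts_apart:
  "a \<in> gap_starts n \<Longrightarrow> b \<in> gap_starts n \<Longrightarrow> a \<noteq> b \<Longrightarrow> a + gap_len n < b \<or> b + gap_len n < a"
proof (induction n arbitrary: a b)
  case 0
  thus ?case by simp
next
  case (Suc n)
  let ?s = "gap_len (Suc n) + ell (Suc n)"
  obtain a' b' where "a' \<in> gap_starts n" "b' \<in> gap_starts n"
    and a: "a = a' \<or> a = a' + ?s" and b: "b = b' \<or> b = b' + ?s"
    using Suc.prems(1,2) by (auto simp: add.assoc)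
  moreover have "0 < ell (Suc n)" "0 < gap_len (Suc n)" using ell_pos gap_len_pos .
  ultimately show ?case
    using Suc.IH[of a' b'] Suc.prems(3) unfolding gap_len_Suc[of n]
    by (cases "a' = b'") (elim disjE; linarith)+
qed

lemma card_gap_starts: "card (gap_starts n) = 2 ^ n"
proof (induction n)
  case 0
  thus ?case by simp
next
  case (Suc n)
  let ?shift = "\<lambda>a. a + gap_len (Suc n) + ell (Suc n)"
  have "a \<noteq> ?shift a" and "\<not> (a + gap_len n < ?shift a)" for a
    using ell_pos[of "Suc n"] gap_len_Suc[of n] gap_len_pos[of "Suc n"] by auto
  hence "gap_starts n \<inter> ?shift ` gap_starts n = {}"
    using gap_starts_apart[of _ n] ell_pos[of "Suc n"] gap_len_pos[of "Suc n"]
    by fastforce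
  moreover have "card (?shift ` gap_starts n) = card (gap_starts n)"
    by (intro card_image) (simp add: inj_on_def)
  ultimately show ?case
    using Suc.IH finite_gap_starts[of n] by (simp add: card_Un_disjoint)
qed

lemma components_gaps:
  "components (\<Union>a\<in>gap_starts n. {a..a + gap_len n}) = (\<lambda>a. {a..a + gap_len n}) ` gap_starts n"
proof (rule components_Union_closed_disjoint)
  show "finite ((\<lambda>a. {a..a + gap_len n}) ` gap_starts n)"
    using finite_gap_starts by simp
  show "closed C \<and> connected C \<and> C \<noteq> {}" if "C \<in> (\<lambda>a. {a..a + gap_len n}) ` gap_starts n" for C
    using that gap_len_pos[of n] by auto
  show "pairwise disjnt ((\<lambda>a. {a..a + gap_len n}) ` gap_starts n)"
    unfolding pairwise_def disjnt_def using gap_starts_apart[of _ n] by fastforce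
qed

lemma Icc_diff_middle_ball:
  fixes a l e :: real
  assumes "0 \<le> e"
  shows "{a..a + (2 * l + e)} - ball (a + (2 * l + e) / 2) (e / 2) = {a..a + l} \<union> {a + l + e..a + l + e + l}"
  using assms unfolding ball_eq_greaterThanLessThan by (auto simp: field_simps)

lemma middle_ball_subset_Icc:
  fixes a l e :: real
  assumes "0 \<le> l"
  shows "ball (a + (2 * l + e) / 2) (e / 2) \<subseteq> {a..a + (2 * l + e)}"
  using assms unfolding ball_eq_greaterThanLessThan by (auto simp: field_simps)

lemma Jfam_gaps:
  assumes "{0..Mc} - R = (\<Union>a\<in>gap_starts n. {a..a + gap_len n})"
  shows "Jfam R m = (\<lambda>a. ball (a + gap_len n / 2) (ell m / 2)) ` gap_starts n"
  unfolding Jfam_def assms components_gaps image_image using gap_len_pos[of n]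
  by (simp add: add_divide_distrib)

lemma complement_Removed: "{0..Mc} - Removed n = (\<Union>a\<in>gap_starts n. {a..a + gap_len n})"
proof (induction n)
  case 0
  thus ?case by (simp add: gap_len_def)
next
  case (Suc n)
  define l where "l = gap_len (Suc n)"
  define e where "e = ell (Suc n)"
  have len: "gap_len n = 2 * l + e" "0 \<le> l" "0 \<le> e"
    using gap_len_Suc[of n] gap_len_pos ell_pos unfolding l_def e_def by (auto simp: less_imp_le)
  let ?I = "\<lambda>a. {a..a + (2 * l + e)}" and ?B = "\<lambda>a. ball (a + (2 * l + e) / 2) (e / 2)"
  have "{0..Mc} - Removed (Suc n) = ({0..Mc} - Removed n) - \<Union>(Jfam (Removed n) (Suc n))"
    by auto
  also have "\<dots> = (\<Union>a\<in>gap_starts n. ?I a) - (\<Union>b\<in>gap_starts n. ?B b)"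
    unfolding Jfam_gaps[OF Suc.IH] Suc.IH len(1) e_def by simp
  also have "\<dots> = (\<Union>a\<in>gap_starts n. ?I a - ?B a)"
    using gap_starts_apart[of _ n] middle_ball_subset_Icc[OF len(2)] unfolding len(1)
    by (fastforce simp: subset_iff)
  also have "\<dots> = (\<Union>a\<in>gap_starts (Suc n). {a..a + l})"
    unfolding Icc_diff_middle_ball[OF len(3)] by (auto simp: l_def e_def add.assoc)
  finally show ?case unfolding l_def .
qed

lemma Jset_Suc: "Jset (Suc n) = (\<lambda>a. ball (a + gap_len n / 2) (ell (Suc n) / 2)) ` gap_starts n"
  unfolding Jset_def using Jfam_gaps[OF complement_Removed] by simp

lemma finite_Jset: "finite (Jset n)"
  unfolding Jset_def Jfam_gaps[OF complement_Removed] using finite_gap_starts by simp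

lemma card_Jset_Suc: "card (Jset (Suc n)) = 2 ^ n"
proof -
  have "inj_on (\<lambda>a. ball (a + gap_len n / 2) (ell (Suc n) / 2)) (gap_starts n)"
    using ell_pos[of "Suc n"] by (auto simp: inj_on_def ball_eq_ball_iff)
  thus ?thesis unfolding Jset_Suc by (simp add: card_image card_gap_starts)
qed

lemma middle_ball_subset_gap:
  assumes "a \<in> gap_starts n"
  shows "ball (a + gap_len n / 2) (ell (Suc n) / 2) \<subseteq> {a..a + gap_len n}"
  using middle_ball_subset_Icc[of "gap_len (Suc n)" a "ell (Suc n)"] gap_len_pos
  by (simp add: gap_len_Suc[of n] less_imp_le)

lemma Jset_Suc_subset_complement: "J \<in> Jset (Suc n) \<Longrightarrow> J \<subseteq> {0..Mc} - Removed n"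
  unfolding Jset_Suc complement_Removed using middle_ball_subset_gap by blast

lemma Jset_Suc_subset_Removed: "J \<in> Jset (Suc n) \<Longrightarrow> J \<subseteq> Removed (Suc n)"
  unfolding Jset_def by auto

lemma Removed_mono: "m \<le> n \<Longrightarrow> Removed m \<subseteq> Removed n"
  by (induction n) (auto simp: le_Suc_eq)

lemma Jset_disjoint:
  assumes "J \<in> Jset (Suc m)" "J' \<in> Jset (Suc n)" "x \<in> J" "x \<in> J'"
  shows "m = n \<and> J = J'"
proof -
  have not_less: "\<not> m < n" if "J \<in> Jset (Suc m)" "J' \<in> Jset (Suc n)" "x \<in> J" "x \<in> J'"
    for m n J J'
    using Jset_Suc_subset_Removed[OF that(1)] Jset_Suc_subset_complement[OF that(2)]
      Removed_mono[OF Suc_leI, of m n] that(3,4) by blast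
  have "m = n" using not_less[OF assms] not_less[OF assms(2,1,4,3)] by simp
  moreover obtain a b where "a \<in> gap_starts n" "b \<in> gap_starts n"
    and "J = ball (a + gap_len n / 2) (ell (Suc n) / 2)" "J' = ball (b + gap_len n / 2) (ell (Suc n) / 2)"
    using assms(1,2) unfolding \<open>m = n\<close> Jset_Suc by blast
  moreover have "a = b" if "a \<in> gap_starts n" "b \<in> gap_starts n"
    and "x \<in> {a..a + gap_len n}" "x \<in> {b..b + gap_len n}" for a b
    using gap_starts_apart[OF that(1,2)] that(3,4) by force
  ultimately show ?thesis using middle_ball_subset_gap assms(3,4) by blast
qed

(* For J = ball c (l/2), i.e. L(J) = l, this is 4 L(J)^(-1/2) dist(x, \<partial>J) on J and 0 outside. *)
definition tent :: "real \<Rightarrow> real \<Rightarrow> real \<Rightarrow> real" where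
  "tent c l x = 4 / sqrt l * max 0 (l / 2 - \<bar>x - c\<bar>)"

lemma tent_nonneg: "0 \<le> tent c l x"
proof (cases "0 < l")
  case False
  hence "l / 2 - \<bar>x - c\<bar> \<le> 0" using abs_ge_zero[of "x - c"] by linarith
  hence "max 0 (l / 2 - \<bar>x - c\<bar>) = 0" by simp
  thus ?thesis by (simp add: tent_def)
qed (simp add: tent_def)

lemma tent_eq_0: "x \<notin> ball c (l / 2) \<Longrightarrow> tent c l x = 0"
  by (simp add: tent_def dist_real_def abs_minus_commute max_def)

lemma tent_pos:
  assumes "x \<in> ball c (l / 2)"
  shows "0 < tent c l x"
proof -
  have "\<bar>x - c\<bar> < l / 2" using assms by (simp add: dist_real_def abs_minus_commute)
  moreover from this have "0 < l" by linarith
  ultimately show ?thesis by (simp add: tent_def)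
qed

lemma tent_center: "0 < l \<Longrightarrow> tent c l c = 2 * sqrt l"
  using real_div_sqrt[of l] by (simp add: tent_def)

lemma tent_le: "0 < l \<Longrightarrow> tent c l x \<le> 2 * sqrt l"
  unfolding tent_center[symmetric, of l c] unfolding tent_def
  by (intro mult_left_mono) (auto simp: max_def)

lemma min_le_sqrt_mult:
  fixes a b :: real
  assumes "0 \<le> a" "0 \<le> b"
  shows "min a b \<le> sqrt (a * b)"
proof (cases "a \<le> b")
  case True
  have "sqrt (a * a) \<le> sqrt (a * b)" using True assms by (intro real_sqrt_le_mono mult_left_mono)
  thus ?thesis using True assms by simp
next
  case False
  have "sqrt (b * b) \<le> sqrt (a * b)" using False assms by (intro real_sqrt_le_mono mult_right_mono) auto
  thus ?thesis using False assms by simp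
qed

lemma tent_holder:
  assumes "0 < l"
  shows "\<bar>tent c l x - tent c l y\<bar> \<le> 4 * sqrt \<bar>x - y\<bar>"
proof -
  define m where "m z = max 0 (l / 2 - \<bar>z - c\<bar>)" for z
  have "\<bar>m x - m y\<bar> \<le> min \<bar>x - y\<bar> l"
    using assms unfolding m_def by (auto simp: abs_real_def max_def)
  also have "\<dots> \<le> sqrt l * sqrt \<bar>x - y\<bar>"
    using min_le_sqrt_mult[of "\<bar>x - y\<bar>" l] assms by (simp add: real_sqrt_mult mult.commute)
  finally have "4 / sqrt l * \<bar>m x - m y\<bar> \<le> 4 / sqrt l * (sqrt l * sqrt \<bar>x - y\<bar>)"
    using assms by (intro mult_left_mono) auto
  moreover have "\<bar>tent c l x - tent c l y\<bar> = 4 / sqrt l * \<bar>m x - m y\<bar>"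
    unfolding tent_def m_def[symmetric] using assms
    by (simp only: right_diff_distrib[symmetric] abs_mult) simp
  ultimately show ?thesis using assms by simp
qed

lemma has_integral_tent_Icc:
  assumes "0 < l"
  shows "(tent c l has_integral l powr (3/2)) {c - l / 2..c + l / 2}"
proof -
  define k where "k = 4 / sqrt l"
  define r where "r = l / 2"
  have r: "0 < r" using assms by (simp add: r_def)
  have rising: "(tent c l has_integral k * r\<^sup>2 / 2) {c - r..c}"
  proof -
    have "((\<lambda>x. k * (x - c + r)) has_integral k * (c - c + r)\<^sup>2 / 2 - k * (c - r - c + r)\<^sup>2 / 2) {c - r..c}"
      using r by (intro fundamental_theorem_of_calculus)
        (auto intro!: derivative_eq_intros simp: has_real_derivative_iff_has_vector_derivative[symmetric])
    hence "((\<lambda>x. k * (x - c + r)) has_integral k * r\<^sup>2 / 2) {c - r..c}" by simp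
    thus ?thesis
      by (rule has_integral_eq[rotated]) (auto simp: tent_def k_def r_def)
  qed
  have falling: "(tent c l has_integral k * r\<^sup>2 / 2) {c..c + r}"
  proof -
    have "((\<lambda>x. k * (c + r - x)) has_integral - k * (c + r - (c + r))\<^sup>2 / 2 - - k * (c + r - c)\<^sup>2 / 2) {c..c + r}"
      using r by (intro fundamental_theorem_of_calculus)
        (auto intro!: derivative_eq_intros simp: has_real_derivative_iff_has_vector_derivative[symmetric] field_simps)
    hence "((\<lambda>x. k * (c + r - x)) has_integral k * r\<^sup>2 / 2) {c..c + r}" by simp
    thus ?thesis
      by (rule has_integral_eq[rotated]) (auto simp: tent_def k_def r_def)
  qed
  have "(tent c l has_integral k * r\<^sup>2 / 2 + k * r\<^sup>2 / 2) {c - r..c + r}"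
    using r by (intro has_integral_combine[OF _ _ rising falling]) auto
  moreover have "k * r\<^sup>2 / 2 + k * r\<^sup>2 / 2 = l powr (3/2)"
  proof -
    have "l powr (3/2) = l * sqrt l" using assms powr_add[of l 1 "1/2"] by (simp add: powr_half_sqrt)
    moreover have "l * l / sqrt l = l * sqrt l"
      using assms by (metis less_imp_le real_div_sqrt times_divide_eq_right)
    ultimately show ?thesis by (simp add: k_def r_def power2_eq_square)
  qed
  ultimately show ?thesis by (simp add: r_def)
qed

lemma has_integral_tent:
  assumes "0 < l" "ball c (l / 2) \<subseteq> S"
  shows "(tent c l has_integral l powr (3/2)) S"
proof -
  have "(tent c l has_integral l powr (3/2)) (ball c (l / 2))"
    using has_integral_tent_Icc[OF assms(1)]
    by (simp add: ball_eq_greaterThanLessThan has_integral_Icc_iff_Ioo)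
  thus ?thesis using tent_eq_0 assms(2) by (rule has_integral_on_superset)
qed

lemma measure_lebesgue_ball_real: "0 < r \<Longrightarrow> measure lebesgue (ball (c::real) r) = 2 * r"
  unfolding ball_eq_greaterThanLessThan by (simp add: measure_completion)

lemma infdist_frontier_ball_real:
  assumes "x \<in> ball c r"
  shows "infdist x (frontier (ball c r)) = r - \<bar>x - (c::real)\<bar>"
proof -
  have "0 < r" using assms by (simp add: dist_real_def)
  hence "frontier (ball c r) = {c - r} \<union> {c + r}" by (auto simp: dist_real_def)
  hence "infdist x (frontier (ball c r)) = infdist x ({c - r} \<union> {c + r})"
    by (simp only:)
  also have "\<dots> = min (dist x (c - r)) (dist x (c + r))"
    by (subst infdist_Un_min) auto
  finally show ?thesis using assms by (auto simp: dist_real_def)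
qed

lemma Jset_ex_Suc: "(\<exists>n\<ge>1. \<exists>J\<in>Jset n. x \<in> J) \<longleftrightarrow> (\<exists>n. \<exists>J\<in>Jset (Suc n). x \<in> J)"
proof
  assume "\<exists>n\<ge>1. \<exists>J\<in>Jset n. x \<in> J"
  then obtain n where "1 \<le> n" "\<exists>J\<in>Jset n. x \<in> J" by blast
  thus "\<exists>n. \<exists>J\<in>Jset (Suc n). x \<in> J" by (cases n) auto
qed auto

lemma gfun_outside: "\<not> (\<exists>n. \<exists>J\<in>Jset (Suc n). x \<in> J) \<Longrightarrow> gfun x = 0"
  unfolding gfun_def Jset_ex_Suc by simp

lemma gfun_Jset_eq_infdist:
  assumes "J \<in> Jset (Suc n)" "x \<in> J"
  shows "gfun x = 4 / sqrt (measure lebesgue J) * infdist x (frontier J)"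
proof -
  \<comment> \<open>The choice in gfun_def is forced, the intervals J_n^k being pairwise disjoint.\<close>
  define J' where "J' = (SOME J. \<exists>n\<ge>1. J \<in> Jset n \<and> x \<in> J)"
  have "\<exists>J. \<exists>n\<ge>1. J \<in> Jset n \<and> x \<in> J" using assms by auto
  hence "\<exists>n\<ge>1. J' \<in> Jset n \<and> x \<in> J'" unfolding J'_def by (rule someI_ex)
  then obtain n' where "1 \<le> n'" "J' \<in> Jset n'" "x \<in> J'" by blast
  hence "J' = J" using Jset_disjoint[OF assms(1) _ assms(2)] by (cases n') auto
  thus ?thesis using assms unfolding gfun_def J'_def[symmetric] by (auto simp: Let_def)
qed

lemma Jset_SucE:
  assumes "J \<in> Jset (Suc n)"
  obtains c where "J = ball c (ell (Suc n) / 2)"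
  using assms unfolding Jset_Suc by blast

lemma JsetE:
  assumes "J \<in> Jset n" "1 \<le> n"
  obtains m c where "n = Suc m" "J \<in> Jset (Suc m)" "J = ball c (ell n / 2)"
proof -
  obtain m where m: "n = Suc m" using assms(2) by (cases n) auto
  moreover obtain c where "J = ball c (ell (Suc m) / 2)" using assms(1) unfolding m by (rule Jset_SucE)
  ultimately show ?thesis using that assms(1) by simp
qed

lemma measure_Jset:
  assumes "J \<in> Jset n" "1 \<le> n"
  shows "measure lebesgue J = ell n"
proof -
  obtain m c where "J = ball c (ell n / 2)" using assms by (rule JsetE)
  thus ?thesis using measure_lebesgue_ball_real[of "ell n / 2" c] ell_pos[of n] by simp
qed

lemma indicator_mult_gfun_Jset:
  assumes J: "J \<in> Jset (Suc n)" and c: "J = ball c (ell (Suc n) / 2)"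
  shows "indicator J x * gfun x = tent c (ell (Suc n)) x"
proof (cases "x \<in> J")
  case True
  let ?l = "ell (Suc n)"
  have "measure lebesgue J = ?l" using measure_Jset[OF J] by simp
  moreover have "infdist x (frontier J) = ?l / 2 - \<bar>x - c\<bar>"
    using True unfolding c by (rule infdist_frontier_ball_real)
  moreover have "0 \<le> ?l / 2 - \<bar>x - c\<bar>"
    using True unfolding c by (simp add: dist_real_def abs_minus_commute)
  ultimately show ?thesis
    using gfun_Jset_eq_infdist[OF J True] True by (simp add: tent_def)
next
  case False
  thus ?thesis using tent_eq_0 c by simp
qed

lemma gfun_Jset_eq_tent:
  assumes "J \<in> Jset (Suc n)" "J = ball c (ell (Suc n) / 2)" "x \<in> J"
  shows "gfun x = tent c (ell (Suc n)) x"
  using indicator_mult_gfun_Jset[OF assms(1,2), of x] assms(3) by simp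

lemma gfun_nonneg: "0 \<le> gfun x"
proof (cases "\<exists>n. \<exists>J\<in>Jset (Suc n). x \<in> J")
  case True
  then obtain n J where J: "J \<in> Jset (Suc n)" "x \<in> J" by blast
  obtain c where "J = ball c (ell (Suc n) / 2)" using J(1) by (rule Jset_SucE)
  thus ?thesis using gfun_Jset_eq_tent J tent_nonneg by simp
qed (simp add: gfun_outside)

lemma gfun_diff_le_sqrt: "gfun x - gfun y \<le> 4 * sqrt \<bar>x - y\<bar>"
proof (cases "\<exists>n. \<exists>J\<in>Jset (Suc n). x \<in> J")
  case True
  then obtain n J where J: "J \<in> Jset (Suc n)" "x \<in> J" by blast
  obtain c where c: "J = ball c (ell (Suc n) / 2)" using J(1) by (rule Jset_SucE)
  have "tent c (ell (Suc n)) y \<le> gfun y"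
    unfolding indicator_mult_gfun_Jset[OF J(1) c, symmetric]
    using gfun_nonneg[of y] by (simp add: indicator_def)
  thus ?thesis
    using gfun_Jset_eq_tent[OF J(1) c J(2)] tent_holder[OF ell_pos[of "Suc n"], of c x y] by linarith
next
  case False
  hence "gfun x = 0" by (simp add: gfun_outside)
  thus ?thesis using gfun_nonneg[of y] real_sqrt_ge_zero[of "\<bar>x - y\<bar>"] by linarith
qed

lemma gfun_holder: "holder_continuous_on (1/2) S gfun"
  unfolding holder_continuous_on_def
proof (intro exI[of _ 4] ballI)
  fix x y
  have "\<bar>gfun x - gfun y\<bar> \<le> 4 * sqrt \<bar>x - y\<bar>"
    using gfun_diff_le_sqrt[of x y] gfun_diff_le_sqrt[of y x] by (simp add: abs_minus_commute)
  thus "\<bar>gfun x - gfun y\<bar> \<le> 4 * \<bar>x - y\<bar> powr (1/2)" by (simp add: powr_half_sqrt)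
qed

lemma gfun_eq_0_iff:
  assumes "x \<in> {0..Mc}"
  shows "gfun x = 0 \<longleftrightarrow> x \<in> Aset"
proof (cases "\<exists>n. \<exists>J\<in>Jset (Suc n). x \<in> J")
  case True
  then obtain n J where J: "J \<in> Jset (Suc n)" "x \<in> J" by blast
  obtain c where c: "J = ball c (ell (Suc n) / 2)" using J(1) by (rule Jset_SucE)
  have "0 < gfun x" using gfun_Jset_eq_tent[OF J(1) c J(2)] tent_pos J(2) c by simp
  moreover have "x \<notin> Aset" unfolding Aset_def using J by force
  ultimately show ?thesis by simp
next
  case False
  thus ?thesis using assms unfolding Aset_def by (auto simp: gfun_outside Jset_ex_Suc[symmetric])
qed

lemma gfun_max_Jset:
  assumes "J \<in> Jset n" "1 \<le> n"
  shows "(\<exists>x\<in>J. gfun x = 2 * sqrt (measure lebesgue J)) \<and> (\<forall>x\<in>J. gfun x \<le> 2 * sqrt (measure lebesgue J))"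
proof -
  obtain m c where n: "n = Suc m" and J: "J \<in> Jset (Suc m)" and c: "J = ball c (ell n / 2)"
    using assms by (rule JsetE)
  have "c \<in> J" unfolding c using ell_pos[of n] by simp
  thus ?thesis
    using gfun_Jset_eq_tent[OF J c[unfolded n]] tent_center[OF ell_pos] tent_le[OF ell_pos]
    unfolding measure_Jset[OF assms] n by metis
qed

lemma gfun_has_integral_Jset:
  assumes "J \<in> Jset n" "1 \<le> n"
  shows "(gfun has_integral measure lebesgue J powr (3/2)) J"
proof -
  obtain m c where n: "n = Suc m" and J: "J \<in> Jset (Suc m)" and c: "J = ball c (ell n / 2)"
    using assms by (rule JsetE)
  have "(tent c (ell n) has_integral ell n powr (3/2)) J"
    using has_integral_tent[OF ell_pos] c by simp
  thus ?thesis unfolding measure_Jset[OF assms]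
    by (rule has_integral_eq[rotated]) (simp add: gfun_Jset_eq_tent[OF J c[unfolded n]] n)
qed

definition gfun_upto :: "nat \<Rightarrow> real \<Rightarrow> real" where
  "gfun_upto N x = indicator (\<Union>n<N. \<Union>(Jset (Suc n))) x * gfun x"

lemma gfun_upto_eq_sum: "gfun_upto N x = (\<Sum>n<N. \<Sum>J\<in>Jset (Suc n). indicator J x * gfun x)"
proof -
  have "disjoint_family_on (\<lambda>n. \<Union>(Jset (Suc n))) {..<N}"
    unfolding disjoint_family_on_def using Jset_disjoint by blast
  hence "indicator (\<Union>n<N. \<Union>(Jset (Suc n))) x = (\<Sum>n<N. indicator (\<Union>(Jset (Suc n))) x :: real)"
    by (intro indicator_UN_disjoint) auto
  moreover have "indicator (\<Union>(Jset (Suc n))) x = (\<Sum>J\<in>Jset (Suc n). indicator J x :: real)" for n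
  proof -
    have "disjoint_family_on (\<lambda>J. J) (Jset (Suc n))"
      unfolding disjoint_family_on_def using Jset_disjoint by blast
    from indicator_UN_disjoint[OF finite_Jset this] show ?thesis by simp
  qed
  ultimately show ?thesis unfolding gfun_upto_def by (simp add: sum_distrib_right)
qed

lemma has_integral_gfun_upto: "(gfun_upto N has_integral (\<Sum>n<N. 2 ^ n / 3 ^ Suc n)) {0..Mc}"
proof -
  have "((\<lambda>x. indicator J x * gfun x) has_integral 1 / 3 ^ Suc n) {0..Mc}" if J: "J \<in> Jset (Suc n)" for n J
  proof -
    obtain c where c: "J = ball c (ell (Suc n) / 2)" using J by (rule Jset_SucE)
    have "ball c (ell (Suc n) / 2) \<subseteq> {0..Mc}" using Jset_Suc_subset_complement[OF J] c by blast
    hence "(tent c (ell (Suc n)) has_integral ell (Suc n) powr (3/2)) {0..Mc}"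
      by (rule has_integral_tent[OF ell_pos])
    hence "(tent c (ell (Suc n)) has_integral 1 / 3 ^ Suc n) {0..Mc}"
      by (simp only: ell_powr_three_halves)
    thus ?thesis unfolding indicator_mult_gfun_Jset[OF J c] .
  qed
  hence "(gfun_upto N has_integral (\<Sum>n<N. \<Sum>J\<in>Jset (Suc n). 1 / 3 ^ Suc n)) {0..Mc}"
    unfolding gfun_upto_eq_sum[abs_def] by (intro has_integral_sum finite_Jset) auto
  thus ?thesis by (simp add: card_Jset_Suc)
qed

lemma gfun_has_integral: "(gfun has_integral 1) {0..Mc}"
proof (rule has_integral_monotone_convergence_increasing[OF has_integral_gfun_upto])
  show "gfun_upto N x \<le> gfun_upto (Suc N) x" for N x
    unfolding gfun_upto_def using gfun_nonneg[of x]
    by (intro mult_right_mono indicator_leI) (auto simp: lessThan_Suc)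
  show "(\<lambda>N. gfun_upto N x) \<longlonglongrightarrow> gfun x" for x
  proof (cases "\<exists>n. \<exists>J\<in>Jset (Suc n). x \<in> J")
    case True
    then obtain n where "\<exists>J\<in>Jset (Suc n). x \<in> J" by blast
    hence "x \<in> (\<Union>m<N. \<Union>(Jset (Suc m)))" if "Suc n \<le> N" for N
      using that by auto
    hence "gfun_upto N x = gfun x" if "Suc n \<le> N" for N
      using that by (simp add: gfun_upto_def)
    thus ?thesis by (intro tendsto_eventually) (auto simp: eventually_sequentially)
  next
    case False
    thus ?thesis by (simp add: gfun_upto_def gfun_outside)
  qed
  show "(\<lambda>N. \<Sum>n<N. 2 ^ n / 3 ^ Suc n) \<longlonglongrightarrow> (1::real)"
    using sums_two_pow_div_pow[of 3] by (simp add: sums_def)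
qed

theorem lemma3:
  shows "(\<lambda>n::nat. 2 ^ n / (3 powr (2/3)) ^ Suc n) sums Mc
    \<and> (\<forall>x\<in>{0..Mc}. gfun x \<ge> 0)
    \<and> (\<forall>n\<ge>1. \<forall>J\<in>Jset n.
          (\<exists>x\<in>J. gfun x = 2 * sqrt (measure lebesgue J))
        \<and> (\<forall>x\<in>J. gfun x \<le> 2 * sqrt (measure lebesgue J)))
    \<and> (\<forall>x\<in>{0..Mc}. gfun x = 0 \<longleftrightarrow> x \<in> Aset)
    \<and> (\<forall>n\<ge>1. \<forall>J\<in>Jset n.
          (gfun has_integral (measure lebesgue J powr (3/2))) J
        \<and> measure lebesgue J powr (3/2) = 1 / 3 ^ n)
    \<and> (gfun has_integral 1) {0..Mc}
    \<and> holder_continuous_on (1/2) {0..Mc} gfun"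
  using sums_Mc[unfolded scale_def] gfun_nonneg gfun_max_Jset gfun_eq_0_iff gfun_has_integral_Jset
    measure_Jset ell_powr_three_halves gfun_has_integral gfun_holder
  by simp

end
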